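(* Let $\Gamma$ be the bipartite graph with vertex set $\{L_1,\dots,L_{12}\}\sqcup\{M_1,\dots,M_{12}\}$, where no two $L$'s and no two $M$'s are adjacent, and $L_i$ is adjacent to $M_j$ if and only if $j\in N(i)$, with $N(1)=\{1,2,6,8,9,12\}$, $N(2)=\{1,2,5,7,10,11\}$, $N(3)=\{3,4,6,8,10,11\}$, $N(4)=\{3,4,5,7,9,12\}$, $N(5)=\{2,4,5,6,10,12\}$, $N(6)=\{1,3,5,6,9,11\}$, $N(7)=\{2,4,7,8,9,11\}$, $N(8)=\{1,3,7,8,10,12\}$, $N(9)=\{1,4,6,7,9,10\}$, $N(10)=\{2,3,5,8,9,10\}$, $N(11)=\{2,3,6,7,11,12\}$, $N(12)=\{1,4,5,8,11,12\}$. Let $S=\mathbb{Z}\Gamma/\operatorname{rad}(\mathbb{Z}\Gamma)$, where $\mathbb{Z}\Gamma$ is the free abelian group on the vertices with Gram matrix $A-2\mathbb{I}_{24}$ ($A$ the adjacency matrix). Then the discriminant quadratic form $q\colon S^\vee/S\to\mathbb{Q}/2\mathbb{Z}$, $q(x)=x^2 \bmod 2\mathbb{Z}$, on the discriminant group $S^\vee/S\cong(\mathbb{Z}/2\mathbb{Z})^{\oplus4}\oplus\mathbb{Z}/16\mathbb{Z}$ is given by the Gram matrix $$\begin{bmatrix}0&\tfrac12\\ \tfrac12&0\end{bmatrix}\oplus\begin{bmatrix}0&\tfrac12\\ \tfrac12&0\end{bmatrix}\oplus\begin{bmatrix}\tfrac{3}{16}\end{bmatrix},$$ where the diagonal entries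 are taken modulo $2\mathbb{Z}$ and the off-diagonal entries modulo $\mathbb{Z}$.
   Context: $\operatorname{rad}$ denotes the kernel of the bilinear form; $S^\vee=\operatorname{Hom}(S,\mathbb{Z})\subset S\otimes\mathbb{Q}$ is the dual lattice. *)

theory Defs
  imports Main "HOL.Rat"
begin

text \<open>Vertices are numbered 0..23: vertex i-1 is L_i (1 \<le> i \<le> 12) and vertex 11+j is M_j
  (1 \<le> j \<le> 12).\<close>

definition NL :: "nat \<Rightarrow> nat set" where
  "NL i = (if i = 1 then {1,2,6,8,9,12}
      else if i = 2 then {1,2,5,7,10,11}
      else if i = 3 then {3,4,6,8,10,11}
      else if i = 4 then {3,4,5,7,9,12}
      else if i = 5 then {2,4,5,6,10,12}
      else if i = 6 then {1,3,5,6,9,11}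
      else if i = 7 then {2,4,7,8,9,11}
      else if i = 8 then {1,3,7,8,10,12}
      else if i = 9 then {1,4,6,7,9,10}
      else if i = 10 then {2,3,5,8,9,10}
      else if i = 11 then {2,3,6,7,11,12}
      else if i = 12 then {1,4,5,8,11,12}
      else {})"

definition adj :: "nat \<Rightarrow> nat \<Rightarrow> bool" where
  "adj u v = ((u < 12 \<and> 12 \<le> v \<and> v < 24 \<and> v - 11 \<in> NL (u + 1)) \<or>
              (v < 12 \<and> 12 \<le> u \<and> u < 24 \<and> u - 11 \<in> NL (v + 1)))"

definition gram :: "nat \<Rightarrow> nat \<Rightarrow> int" where
  "gram u v = (if adj u v then 1 else 0) - (if u = v then 2 else 0)"

definition bil :: "(nat \<Rightarrow> rat) \<Rightarrow> (nat \<Rightarrow> rat) \<Rightarrow> rat" where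
  "bil x y = (\<Sum>u<24. \<Sum>v<24. x u * of_int (gram u v) * y v)"

definition QGamma :: "(nat \<Rightarrow> rat) set" where
  "QGamma = {x. \<forall>u\<ge>24. x u = 0}"

definition ZGamma :: "(nat \<Rightarrow> rat) set" where
  "ZGamma = {x \<in> QGamma. \<forall>u<24. x u \<in> \<int>}"

text \<open>Radical of Q Gamma; rad(Z Gamma) = radQ \<inter> ZGamma, and S \<otimes> Q = QGamma / radQ.\<close>
definition radQ :: "(nat \<Rightarrow> rat) set" where
  "radQ = {x \<in> QGamma. \<forall>y \<in> QGamma. bil x y = 0}"

text \<open>Preimage in Q Gamma of the dual lattice S^\<or> = Hom(S, Z) \<subseteq> S \<otimes> Q.\<close>
definition dualL :: "(nat \<Rightarrow> rat) set" where
  "dualL = {x \<in> QGamma. \<forall>y \<in> ZGamma. bil x y \<in> \<int>}"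

text \<open>Preimage in Q Gamma of S: x represents the zero class of S^\<or>/S.\<close>
definition in_S :: "(nat \<Rightarrow> rat) \<Rightarrow> bool" where
  "in_S x = (\<exists>z \<in> ZGamma. \<exists>r \<in> radQ. x = (\<lambda>u. z u + r u))"

definition target_gram :: "nat \<Rightarrow> nat \<Rightarrow> rat" where
  "target_gram k l =
     (if (k, l) \<in> {(0,1),(1,0),(2,3),(3,2)} then 1/2
      else if k = 4 \<and> l = 4 then 3/16 else 0)"

definition lincomb :: "(nat \<Rightarrow> int) \<Rightarrow> (nat \<Rightarrow> nat \<Rightarrow> rat) \<Rightarrow> nat \<Rightarrow> rat" where
  "lincomb c e = (\<lambda>u. \<Sum>k<5. of_int (c k) * e k u)"

end

theory Submission
  imports Defs
begin

text \<open>
  Write G for the Gram operator x \<mapsto> (A - 2 I) x.  A vector x of Q Gamma lies in the dual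
  lattice iff G x is integral, and it represents 0 in S^\<or>/S iff G x = G z for some integral z.
  Thus 2 e_k (k < 4) and 16 e_4 vanish in S^\<or>/S because their images under G are images of
  integral vectors.  Conversely an element \<Sum> c_k e_k of S pairs integrally with every e_j,
  which by the Gram matrix of the e_k forces 2 | c_k (k < 4) and 16 | c_4.  For generation, G has
  rank 15: G r vanishes as soon as it vanishes on 15 suitable coordinates (pair G r with kernel
  vectors of G having a single nonzero entry outside them), and on these coordinates the map
  (c, z) \<mapsto> G (\<Sum> c_k e_k + z) on Z^5 \<times> Z^24 has an integral right inverse, so that G x
  can be matched for every dual vector x.
\<close>

lemma sum_lessThan_eq_sum_list: "(\<Sum>v<n. f v) = sum_list (map f [0..<n])"
  by (simp add: atLeast0LessThan[symmetric] sum_set_upt_conv_sum_list_nat[symmetric])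

lemma all_less_five: "(\<forall>k<5. P k) \<longleftrightarrow> P 0 \<and> P 1 \<and> P 2 \<and> P 3 \<and> P (4 :: nat)"
  by (auto simp: numeral_eq_Suc less_Suc_eq)

lemma dvd_if_divide_eq_Ints:
  fixes t :: "'a :: field_char_0"
  assumes "of_int a / of_int m = of_int n - t" and "t \<in> \<int>" and "m \<noteq> 0"
  shows "m dvd a"
proof -
  have "(of_int a :: 'a) / of_int m \<in> \<int>"
    unfolding assms(1) using assms(2) by (intro Ints_diff Ints_of_int)
  with assms(3) show ?thesis by (simp add: of_int_div_of_int_in_Ints_iff)
qed

section \<open>The Gram operator\<close>

definition gram_apply :: "(nat \<Rightarrow> rat) \<Rightarrow> nat \<Rightarrow> rat" where
  "gram_apply x v = (\<Sum>u<24. x u * of_int (gram u v))"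

lemma gram_commute: "gram u v = gram v u"
  unfolding gram_def adj_def by auto

lemma bil_eq_sum_gram_apply: "bil x y = (\<Sum>v<24. gram_apply x v * y v)"
  unfolding bil_def gram_apply_def sum_distrib_right by (rule sum.swap)

lemma sum_gram_apply_commute:
  "(\<Sum>v<24. gram_apply x v * y v) = (\<Sum>v<24. x v * gram_apply y v)"
  unfolding gram_apply_def sum_distrib_left sum_distrib_right
  by (subst sum.swap) (simp add: gram_commute mult_ac)

lemma bil_commute: "bil x y = bil y x"
  unfolding bil_eq_sum_gram_apply sum_gram_apply_commute[of x y] by (simp add: mult.commute)

lemma bil_add_right: "bil x (\<lambda>u. y u + z u) = bil x y + bil x z"
  by (simp add: bil_eq_sum_gram_apply distrib_left sum.distrib)

lemma bil_lincomb_right: "bil x (lincomb c e) = (\<Sum>k<5. of_int (c k) * bil x (e k))"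
  unfolding bil_eq_sum_gram_apply lincomb_def sum_distrib_left
  by (subst sum.swap) (simp add: mult_ac)

lemma gram_apply_diff: "gram_apply (\<lambda>u. x u - y u) v = gram_apply x v - gram_apply y v"
  unfolding gram_apply_def by (simp add: left_diff_distrib sum_subtractf)

lemma gram_apply_add: "gram_apply (\<lambda>u. x u + y u) v = gram_apply x v + gram_apply y v"
  unfolding gram_apply_def by (simp add: distrib_right sum.distrib)

lemma gram_apply_sum: "gram_apply (\<lambda>u. \<Sum>a\<in>A. f a u) v = (\<Sum>a\<in>A. gram_apply (f a) v)"
  unfolding gram_apply_def sum_distrib_right by (rule sum.swap)

lemma gram_apply_scale: "gram_apply (\<lambda>u. c * x u) v = c * gram_apply x v"
  unfolding gram_apply_def by (simp add: sum_distrib_left mult_ac)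

lemma gram_apply_lincomb:
  "gram_apply (lincomb c e) v = (\<Sum>k<5. of_int (c k) * gram_apply (e k) v)"
  unfolding lincomb_def gram_apply_sum gram_apply_scale ..

lemma gram_apply_eq_bil_indicator:
  "v < 24 \<Longrightarrow> gram_apply x v = bil x (\<lambda>u. if u = v then 1 else 0)"
  by (simp add: bil_eq_sum_gram_apply if_distrib cong: if_cong)

lemma dualL_iff: "x \<in> dualL \<longleftrightarrow> x \<in> QGamma \<and> (\<forall>v<24. gram_apply x v \<in> \<int>)"
proof safe
  fix v :: nat assume "x \<in> dualL" "v < 24"
  moreover have "(\<lambda>u. if u = v then 1 else 0) \<in> ZGamma"
    using \<open>v < 24\<close> by (simp add: ZGamma_def QGamma_def)
  ultimately show "gram_apply x v \<in> \<int>"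
    by (simp add: dualL_def gram_apply_eq_bil_indicator)
next
  assume "x \<in> QGamma" and G: "\<forall>v<24. gram_apply x v \<in> \<int>"
  have "bil x y \<in> \<int>" if "y \<in> ZGamma" for y
    unfolding bil_eq_sum_gram_apply using G that by (intro Ints_sum Ints_mult) (auto simp: ZGamma_def)
  with \<open>x \<in> QGamma\<close> show "x \<in> dualL" by (simp add: dualL_def)
qed (simp add: dualL_def)

lemma radQ_iff: "x \<in> radQ \<longleftrightarrow> x \<in> QGamma \<and> (\<forall>v<24. gram_apply x v = 0)"
proof safe
  fix v :: nat assume "x \<in> radQ" "v < 24"
  moreover have "(\<lambda>u. if u = v then 1 else 0) \<in> QGamma"
    using \<open>v < 24\<close> by (simp add: QGamma_def)
  ultimately show "gram_apply x v = 0"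
    by (simp add: radQ_def gram_apply_eq_bil_indicator)
qed (simp_all add: radQ_def bil_eq_sum_gram_apply)

lemma in_S_if_gram_apply_eq:
  assumes "x \<in> QGamma" and "z \<in> ZGamma" and "\<And>v. v < 24 \<Longrightarrow> gram_apply x v = gram_apply z v"
  shows "in_S x"
proof -
  have "(\<lambda>u. x u - z u) \<in> radQ"
    using assms by (auto simp: radQ_iff QGamma_def ZGamma_def gram_apply_diff)
  with \<open>z \<in> ZGamma\<close> show ?thesis
    unfolding in_S_def by (intro bexI[where x = z] bexI[where x = "\<lambda>u. x u - z u"]) auto
qed

lemma bil_in_Ints_if_in_S:
  assumes "y \<in> dualL" and "in_S x"
  shows "bil y x \<in> \<int>"
proof -
  obtain z r where "z \<in> ZGamma" "r \<in> radQ" "x = (\<lambda>u. z u + r u)"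
    using \<open>in_S x\<close> unfolding in_S_def by blast
  moreover have "bil y r = 0"
    using \<open>r \<in> radQ\<close> \<open>y \<in> dualL\<close> by (simp add: radQ_def dualL_def bil_commute[of y])
  ultimately show ?thesis using \<open>y \<in> dualL\<close> by (simp add: bil_add_right dualL_def)
qed

definition vec_of_list :: "rat list \<Rightarrow> nat \<Rightarrow> rat" where
  "vec_of_list xs u = (if u < length xs then xs ! u else 0)"

lemma vec_of_list_in_QGamma: "length xs \<le> 24 \<Longrightarrow> vec_of_list xs \<in> QGamma"
  by (simp add: QGamma_def vec_of_list_def)

lemma vec_of_int_list_in_ZGamma: "length xs \<le> 24 \<Longrightarrow> vec_of_list (map of_int xs) \<in> ZGamma"
  by (simp add: ZGamma_def QGamma_def vec_of_list_def)

\<comment> \<open>Tabulated adjacency lists, so that the computations below need not re-evaluate \<open>adj\<close>\<close>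
definition nbrs :: "nat list list" where
  "nbrs =
    [[12, 13, 17, 19, 20, 23],
     [12, 13, 16, 18, 21, 22],
     [14, 15, 17, 19, 21, 22],
     [14, 15, 16, 18, 20, 23],
     [13, 15, 16, 17, 21, 23],
     [12, 14, 16, 17, 20, 22],
     [13, 15, 18, 19, 20, 22],
     [12, 14, 18, 19, 21, 23],
     [12, 15, 17, 18, 20, 21],
     [13, 14, 16, 19, 20, 21],
     [13, 14, 17, 18, 22, 23],
     [12, 15, 16, 19, 22, 23],
     [0, 1, 5, 7, 8, 11],
     [0, 1, 4, 6, 9, 10],
     [2, 3, 5, 7, 9, 10],
     [2, 3, 4, 6, 8, 11],
     [1, 3, 4, 5, 9, 11],
     [0, 2, 4, 5, 8, 10],
     [1, 3, 6, 7, 8, 10],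
     [0, 2, 6, 7, 9, 11],
     [0, 3, 5, 6, 8, 9],
     [1, 2, 4, 7, 8, 9],
     [1, 2, 5, 6, 10, 11],
     [0, 3, 4, 7, 10, 11]]"

lemma gram_eq_nbrs:
  assumes "u < 24" and "v < 24"
  shows "gram u v = (if u \<in> set (nbrs ! v) then 1 else 0) - (if u = v then 2 else 0)"
proof -
  have "list_all (\<lambda>v. list_all (\<lambda>u. adj u v = (u \<in> set (nbrs ! v))) [0..<24]) [0..<24]"
    by code_simp
  with assms show ?thesis by (simp add: list_all_iff gram_def)
qed

lemma gram_apply_eq_nbrs:
  assumes "v < 24"
  shows "gram_apply x v = sum_list (map x (nbrs ! v)) - 2 * x v"
proof -
  have "list_all (\<lambda>v. distinct (nbrs ! v) \<and> list_all (\<lambda>u. u < 24) (nbrs ! v)) [0..<24]"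
    by code_simp
  with assms have nbrs: "distinct (nbrs ! v)" "set (nbrs ! v) \<subseteq> {..<24}"
    by (auto simp: list_all_iff)
  have "gram_apply x v =
      (\<Sum>u<24. if u \<in> set (nbrs ! v) then x u else 0) - (\<Sum>u<24. if u = v then 2 * x u else 0)"
    unfolding gram_apply_def sum_subtractf[symmetric]
    by (rule sum.cong) (auto simp: gram_eq_nbrs assms)
  also have "\<dots> = sum x (set (nbrs ! v)) - 2 * x v"
    using nbrs(2) assms by (simp add: sum.inter_restrict[symmetric] Int_absorb1)
  finally show ?thesis
    using nbrs(1) by (simp add: sum_list_distinct_conv_sum_set)
qed

definition gram_apply_list :: "rat list \<Rightarrow> nat \<Rightarrow> rat" where
  "gram_apply_list xs v = sum_list (map (vec_of_list xs) (nbrs ! v)) - 2 * vec_of_list xs v"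

lemma gram_apply_vec_of_list: "v < 24 \<Longrightarrow> gram_apply (vec_of_list xs) v = gram_apply_list xs v"
  by (simp add: gram_apply_eq_nbrs gram_apply_list_def)

section \<open>The generators and their orders\<close>

definition gen_list :: "rat list list" where
  "gen_list =
    [[0, 1/2, 0, 1/2, 0, 0, 0, 0, 0, 1/2, 0, 1/2, 0, 0, 0, 0, 0, 0, 0, 0, 0, 0, 0, 0],
     [0, 0, 0, 0, 0, 1/2, 1/2, 0, 1/2, 1/2, 0, 0, 0, 0, 0, 0, 0, 0, 0, 0, 0, 0, 0, 0],
     [0, 0, 0, 0, 1/2, 1/2, 0, 0, 0, 1/2, 0, 1/2, 0, 0, 0, 0, 0, 0, 0, 0, 0, 0, 0, 0],
     [1/2, 0, 0, 1/2, 0, 0, 0, 0, 0, 0, 1/2, 1/2, 0, 0, 0, 0, 0, 0, 0, 0, 0, 0, 0, 0],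
     [-(3/8), -(3/8), 0, 1/8, -(3/16), -(1/16), 5/16, 5/16, 1/8, 1/8, 1/2, -(3/8), -(3/8), 0, 0, 0, -(3/8), 0, 0, 0, -(3/8), 0, 0, 0]]"

definition disc_gen :: "nat \<Rightarrow> nat \<Rightarrow> rat" where
  "disc_gen k = vec_of_list (gen_list ! k)"

lemma disc_gen_in_dualL: "k < 5 \<Longrightarrow> disc_gen k \<in> dualL"
proof -
  assume "k < 5"
  \<comment> \<open>\<open>of_int \<lfloor>q\<rfloor> = q\<close> is an executable test for \<open>q \<in> \<int>\<close>\<close>
  have "list_all (\<lambda>k. length (gen_list ! k) = 24 \<and>
      list_all (\<lambda>v. of_int \<lfloor>gram_apply_list (gen_list ! k) v\<rfloor> = gram_apply_list (gen_list ! k) v)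
        [0..<24]) [0..<5]"
    by code_simp
  with \<open>k < 5\<close> have len: "length (gen_list ! k) = 24"
    and int: "\<And>v. v < 24 \<Longrightarrow> of_int \<lfloor>gram_apply_list (gen_list ! k) v\<rfloor> = gram_apply_list (gen_list ! k) v"
    by (auto simp: list_all_iff)
  have "gram_apply (disc_gen k) v \<in> \<int>" if "v < 24" for v
    using int[OF that] unfolding disc_gen_def gram_apply_vec_of_list[OF that] by (metis Ints_of_int)
  with len show ?thesis by (simp add: dualL_iff disc_gen_def vec_of_list_in_QGamma)
qed

definition gen_gram :: "rat list list" where
  "gen_gram =
    [[-2, -(1/2), -1, -1, -1],
     [-(1/2), -2, -1, 0, -2],
     [-1, -1, -2, -(1/2), -1],
     [-1, 0, -(1/2), -2, -1],
     [-1, -2, -1, -1, -(29/16)]]"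

lemma bil_disc_gen: "k < 5 \<Longrightarrow> l < 5 \<Longrightarrow> bil (disc_gen k) (disc_gen l) = gen_gram ! k ! l"
proof -
  assume "k < 5" "l < 5"
  have "list_all (\<lambda>k. list_all (\<lambda>l.
      sum_list (map (\<lambda>v. gram_apply_list (gen_list ! k) v * vec_of_list (gen_list ! l) v) [0..<24])
        = gen_gram ! k ! l) [0..<5]) [0..<5]"
    by code_simp
  with \<open>k < 5\<close> \<open>l < 5\<close> show ?thesis
    by (simp add: list_all_iff bil_eq_sum_gram_apply disc_gen_def gram_apply_vec_of_list
        sum_lessThan_eq_sum_list)
qed

definition gen_order :: "nat \<Rightarrow> int" where
  "gen_order k = (if k = 4 then 16 else 2)"

definition order_witness_list :: "int list list" where
  "order_witness_list =
    [[0, 0, 0, 2, 0, 0, 0, 0, 0, 2, 0, 0, -1, 0, 1, 0, 0, 0, 0, 0, 1, 0, -1, 0],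
     [0, 0, 0, 0, 0, 1, 1, 0, 1, 1, 0, 0, 0, 0, 0, 0, 0, 0, 0, 0, 0, 0, 0, 0],
     [-1, 0, 1, 0, 0, 2, -1, 1, 0, 0, 0, 2, 1, -2, 1, 0, 0, 0, 0, 0, -1, 0, 1, 0],
     [2, 0, -1, 1, 0, 0, 0, 0, 1, 0, 0, 1, 1, 0, -1, 0, 0, 0, 0, 0, 1, 0, -1, 0],
     [5, 0, -11, -4, 0, -4, 8, 2, 10, -1, 0, -3, 5, 6, -17, 0, -6, 0, 0, 0, -1, 0, -5, 0]]"

definition order_witness :: "nat \<Rightarrow> nat \<Rightarrow> rat" where
  "order_witness k = vec_of_list (map of_int (order_witness_list ! k))"

lemma order_witness_correct:
  assumes "k < 5"
  shows "order_witness k \<in> ZGamma"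
    and "\<And>v. v < 24 \<Longrightarrow> gram_apply (order_witness k) v = of_int (gen_order k) * gram_apply (disc_gen k) v"
proof -
  have "list_all (\<lambda>k. length (order_witness_list ! k) = 24 \<and>
      list_all (\<lambda>v. gram_apply_list (map of_int (order_witness_list ! k)) v
        = of_int (gen_order k) * gram_apply_list (gen_list ! k) v) [0..<24]) [0..<5]"
    by code_simp
  with assms show "order_witness k \<in> ZGamma"
    and "\<And>v. v < 24 \<Longrightarrow> gram_apply (order_witness k) v = of_int (gen_order k) * gram_apply (disc_gen k) v"
    by (simp_all add: list_all_iff order_witness_def disc_gen_def gram_apply_vec_of_list
        vec_of_int_list_in_ZGamma)
qed

lemma in_S_lincomb_if_dvd:
  assumes "\<forall>k<5. gen_order k dvd c k"
  shows "in_S (lincomb c disc_gen)"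
proof -
  define z where "z u = (\<Sum>k<5. of_int (c k div gen_order k) * order_witness k u)" for u
  have "lincomb c disc_gen \<in> QGamma"
    using disc_gen_in_dualL by (auto simp: lincomb_def QGamma_def dualL_def)
  moreover have "z \<in> ZGamma"
    using order_witness_correct(1) unfolding z_def ZGamma_def QGamma_def
    by (auto intro!: Ints_sum Ints_mult)
  moreover have "gram_apply (lincomb c disc_gen) v = gram_apply z v" if "v < 24" for v
  proof -
    have "of_int (c k) * gram_apply (disc_gen k) v
        = of_int (c k div gen_order k) * gram_apply (order_witness k) v" if "k < 5" for k
    proof -
      have "c k = c k div gen_order k * gen_order k"
        using assms that by simp
      then show ?thesis
        using that \<open>v < 24\<close> by (simp add: order_witness_correct(2)) (metis mult.assoc of_int_mult)
    qed
    then show ?thesis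
      unfolding gram_apply_lincomb z_def gram_apply_sum gram_apply_scale by simp
  qed
  ultimately show ?thesis by (rule in_S_if_gram_apply_eq)
qed

lemma dvd_if_in_S_lincomb:
  assumes "in_S (lincomb c disc_gen)"
  shows "\<forall>k<5. gen_order k dvd c k"
proof -
  define p where "p j = (\<Sum>k<5. of_int (c k) * gen_gram ! j ! k)" for j
  have p: "p j \<in> \<int>" if "j < 5" for j
    using bil_in_Ints_if_in_S[OF disc_gen_in_dualL[OF that] assms] that
    by (simp add: p_def bil_lincomb_right bil_disc_gen)
  have eq: "of_int (c 0) / of_int 2 = of_int (- 2 * c 1 - c 2 - 2 * c 4) - p 1"
    "of_int (c 1) / of_int 2 = of_int (- 2 * c 0 - c 2 - c 3 - c 4) - p 0"
    "of_int (c 2) / of_int 2 = of_int (- c 0 - 2 * c 3 - c 4) - p 3"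
    "of_int (c 3) / of_int 2 = of_int (- c 0 - c 1 - 2 * c 2 - c 4) - p 2"
    "of_int (29 * c 4) / of_int 16 = of_int (- c 0 - 2 * c 1 - c 2 - c 3) - p 4"
    by (simp_all add: p_def numeral_eq_Suc gen_gram_def field_simps)
  have "2 dvd c 0" "2 dvd c 1" "2 dvd c 2" "2 dvd c 3" "16 dvd 29 * c 4"
    using dvd_if_divide_eq_Ints[OF eq(1) p] dvd_if_divide_eq_Ints[OF eq(2) p]
      dvd_if_divide_eq_Ints[OF eq(3) p] dvd_if_divide_eq_Ints[OF eq(4) p]
      dvd_if_divide_eq_Ints[OF eq(5) p]
    by simp_all
  then show ?thesis
    by (simp add: all_less_five gen_order_def) presburger
qed

lemma in_S_lincomb_iff: "in_S (lincomb c disc_gen) \<longleftrightarrow> (\<forall>k<5. gen_order k dvd c k)"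
  using in_S_lincomb_if_dvd dvd_if_in_S_lincomb by blast

section \<open>Generation of the discriminant group\<close>

definition row_basis :: "nat list" where
  "row_basis = [1, 2, 4, 5, 6, 8, 9, 11, 12, 13, 14, 15, 19, 20, 22]"

lemma row_basis_bounds: "length row_basis = 15" "b < 15 \<Longrightarrow> row_basis ! b < 24"
proof -
  have "length row_basis = 15 \<and> list_all (\<lambda>v. v < 24) row_basis"
    by code_simp
  then show "length row_basis = 15" "b < 15 \<Longrightarrow> row_basis ! b < 24"
    by (auto simp: list_all_length)
qed

definition kernel_list :: "(nat \<times> int list) list" where
  "kernel_list =
    [(0, [1, 0, -1, 0, 0, 0, 0, 0, 0, 1, 0, -1, 0, 1, 0, -1, 0, 0, 0, 0, 1, 0, -1, 0]),
     (3, [0, -1, 0, 1, 0, 0, 0, 0, 0, 1, 0, -1, -1, 0, 1, 0, 0, 0, 0, 0, 1, 0, -1, 0]),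
     (7, [0, 0, 0, 0, -1, 1, -1, 1, 0, 0, 0, 0, 1, -1, 1, -1, 0, 0, 0, 0, 0, 0, 0, 0]),
     (10, [0, 0, 0, 0, 0, 0, 0, 0, -1, 1, 1, -1, -1, 1, 1, -1, 0, 0, 0, 0, 0, 0, 0, 0]),
     (16, [0, 1, -1, 0, 0, 1, -1, 0, 0, 0, 0, 0, 1, 0, 0, -1, 1, 0, 0, -1, 0, 0, 0, 0]),
     (17, [0, 0, 0, 0, 0, 1, -1, 0, 1, -1, 0, 0, 1, -1, 0, 0, 0, 1, 0, -1, 0, 0, 0, 0]),
     (18, [0, 1, -1, 0, 0, 0, 0, 0, 1, -1, 0, 0, 1, 0, -1, 0, 0, 0, 1, -1, 0, 0, 0, 0]),
     (21, [0, 0, 0, 0, 1, -1, 0, 0, 0, 1, 0, -1, -1, 1, 0, 0, 0, 0, 0, 0, 0, 1, -1, 0]),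
     (23, [0, 0, 0, 0, 1, -1, 0, 0, 0, -1, 0, 1, 0, 0, -1, 1, 0, 0, 0, 0, -1, 0, 0, 1])]"

lemma kernel_vector_with_pivot:
  assumes "v < 24" and "v \<notin> set row_basis"
  obtains y where "\<And>t. t < 24 \<Longrightarrow> gram_apply y t = 0"
    and "\<And>u. u < 24 \<Longrightarrow> u \<notin> set row_basis \<Longrightarrow> y u = (if u = v then 1 else 0)"
proof -
  have "list_all (\<lambda>v. v \<in> set row_basis \<or> v \<in> set (map fst kernel_list)) [0..<24] \<and>
      list_all (\<lambda>(v, ks). list_all (\<lambda>t. gram_apply_list (map of_int ks) t = 0) [0..<24] \<and>
        list_all (\<lambda>u. u \<in> set row_basis \<or> vec_of_list (map of_int ks) u = (if u = v then 1 else 0))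
          [0..<24]) kernel_list"
    by code_simp
  with assms obtain ks where "(v, ks) \<in> set kernel_list"
    and "list_all (\<lambda>t. gram_apply_list (map of_int ks) t = 0) [0..<24]"
    and "list_all (\<lambda>u. u \<in> set row_basis \<or> vec_of_list (map of_int ks) u = (if u = v then 1 else 0)) [0..<24]"
    by (fastforce simp: list_all_iff)
  then show ?thesis
    by (intro that[of "vec_of_list (map of_int ks)"]) (auto simp: list_all_iff gram_apply_vec_of_list)
qed

lemma gram_apply_vanishes_if_vanishes_on_row_basis:
  assumes "\<And>b. b < 15 \<Longrightarrow> gram_apply r (row_basis ! b) = 0" and "v < 24"
  shows "gram_apply r v = 0"
proof (cases "v \<in> set row_basis")
  case True
  then show ?thesis using assms(1) row_basis_bounds(1) by (auto simp: in_set_conv_nth)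
next
  case False
  obtain y where kernel: "\<And>t. t < 24 \<Longrightarrow> gram_apply y t = 0"
    and pivot: "\<And>u. u < 24 \<Longrightarrow> u \<notin> set row_basis \<Longrightarrow> y u = (if u = v then 1 else 0)"
    using kernel_vector_with_pivot[OF \<open>v < 24\<close> False] by blast
  have basis: "gram_apply r u = 0" if "u \<in> set row_basis" for u
    using that assms(1) row_basis_bounds(1) by (auto simp: in_set_conv_nth)
  have "y u * gram_apply r u = (if u = v then gram_apply r u else 0)" if "u < 24" for u
    using False that by (cases "u \<in> set row_basis") (auto simp: basis pivot)
  then have "(\<Sum>u<24. y u * gram_apply r u) = (\<Sum>u<24. if u = v then gram_apply r u else 0)"
    by simp
  then have "gram_apply r v = (\<Sum>u<24. y u * gram_apply r u)"
    using \<open>v < 24\<close> by simp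
  also have "\<dots> = (\<Sum>t<24. gram_apply y t * r t)"
    by (simp add: sum_gram_apply_commute)
  also have "\<dots> = 0"
    by (simp add: kernel)
  finally show ?thesis .
qed

definition unit_coeff_list :: "int list list" where
  "unit_coeff_list =
    [[4, -2, 3, -6, 6],
     [8, -4, 5, -10, 12],
     [-8, 2, -4, 11, -10],
     [13, -4, 6, -17, 16],
     [-15, 6, -8, 20, -20],
     [23, -10, 13, -30, 30],
     [-5, 2, -3, 7, -6],
     [-4, 2, -2, 5, -6],
     [18, -7, 10, -24, 23],
     [-12, 4, -6, 16, -15],
     [8, -3, 4, -10, 11],
     [-16, 6, -8, 22, -21],
     [-14, 6, -8, 18, -18],
     [8, -3, 4, -10, 10],
     [4, -1, 2, -6, 4]]"

definition unit_preimage_list :: "int list list" where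
  "unit_preimage_list =
    [[5, 0, 0, 0, 0, 0, -3, 0, 0, -5, 0, 4, 4, -2, 0, 0, 3, 0, 0, 0, 0, 0, 0, 2],
     [9, 0, 0, 0, 0, 0, -5, 0, 0, -9, 0, 6, 7, -3, 1, 0, 4, 0, 0, 0, 1, 0, 0, 4],
     [-9, 0, 0, 0, 0, 0, 5, 0, 0, 9, 0, -6, -7, 3, 0, 0, -4, 0, 0, 0, -1, 0, 0, -2],
     [14, 0, 0, 0, 0, 0, -8, 0, 0, -14, 0, 10, 11, -5, 0, 0, 7, 0, 0, 0, 1, 0, 0, 4],
     [-17, 0, 0, 0, 0, 0, 9, 0, 0, 17, 0, -12, -13, 6, 0, 0, -8, 0, 0, 0, -1, 0, 0, -6],
     [26, 0, 0, 0, 0, 0, -14, 0, 0, -26, 0, 18, 20, -9, 0, 0, 12, 0, 0, 0, 1, 0, 0, 10],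
     [-5, 0, 0, 0, 0, 0, 3, 0, 0, 5, 0, -4, -4, 2, 0, 0, -3, 0, 0, 0, 0, 0, 0, -2],
     [-5, 0, 0, 0, 0, 0, 3, 0, 0, 5, 0, -4, -4, 2, 0, 0, -2, 0, 0, 0, 0, 0, 0, -2],
     [20, 0, 0, 0, 0, 0, -11, 0, 0, -20, 0, 14, 15, -7, 0, 0, 10, 0, 0, 0, 1, 0, 0, 7],
     [-13, 0, 0, 0, 0, 0, 7, 0, 0, 13, 0, -9, -10, 4, 0, 0, -6, 0, 0, 0, -1, 0, 0, -4],
     [9, 0, 0, 0, 0, 0, -5, 0, 0, -9, 0, 6, 7, -3, 0, 0, 4, 0, 0, 0, 1, 0, 0, 3],
     [-19, 0, 0, 0, 0, 0, 10, 0, 0, 18, -1, -13, -14, 6, 0, 0, -8, 0, 0, 0, -1, 0, 0, -6],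
     [-15, 0, 0, 0, 0, 0, 9, 0, 0, 16, 0, -11, -12, 6, 0, 0, -8, 0, 0, 0, 0, 0, 0, -6],
     [9, 0, 0, 0, 0, 0, -5, 0, 0, -9, 0, 6, 7, -3, 0, 0, 4, 0, 0, 0, 0, 0, 0, 3],
     [4, 0, 0, 0, 0, 0, -2, 0, 0, -4, 1, 3, 3, -1, 0, 0, 2, 0, 0, 0, 0, 0, 0, 1]]"

definition unit_coeffs :: "nat \<Rightarrow> nat \<Rightarrow> int" where
  "unit_coeffs a k = unit_coeff_list ! a ! k"

definition unit_preimage :: "nat \<Rightarrow> nat \<Rightarrow> rat" where
  "unit_preimage a = vec_of_list (map of_int (unit_preimage_list ! a))"

lemma unit_solution_correct:
  assumes "a < 15"
  shows "unit_preimage a \<in> ZGamma"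
    and "\<And>b. b < 15 \<Longrightarrow> gram_apply (\<lambda>u. lincomb (unit_coeffs a) disc_gen u + unit_preimage a u)
      (row_basis ! b) = (if a = b then 1 else 0)"
proof -
  have "list_all (\<lambda>a. length (unit_preimage_list ! a) = 24 \<and> list_all (\<lambda>b.
      sum_list (map (\<lambda>k. of_int (unit_coeff_list ! a ! k) * gram_apply_list (gen_list ! k) (row_basis ! b))
        [0..<5]) + gram_apply_list (map of_int (unit_preimage_list ! a)) (row_basis ! b)
      = (if a = b then 1 else 0)) [0..<15]) [0..<15]"
    by code_simp
  with assms show "unit_preimage a \<in> ZGamma"
    and "\<And>b. b < 15 \<Longrightarrow> gram_apply (\<lambda>u. lincomb (unit_coeffs a) disc_gen u + unit_preimage a u)
      (row_basis ! b) = (if a = b then 1 else 0)"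
    by (simp_all add: list_all_iff unit_preimage_def vec_of_int_list_in_ZGamma gram_apply_add
        gram_apply_lincomb unit_coeffs_def disc_gen_def gram_apply_vec_of_list row_basis_bounds
        sum_lessThan_eq_sum_list)
qed

lemma exists_lincomb_with_gram_apply_on_row_basis:
  fixes w :: "nat \<Rightarrow> int"
  shows "\<exists>c. \<exists>z\<in>ZGamma. \<forall>b<15.
    gram_apply (\<lambda>u. lincomb c disc_gen u + z u) (row_basis ! b) = of_int (w b)"
proof (intro exI bexI allI impI)
  define c where "c k = (\<Sum>a<15. w a * unit_coeffs a k)" for k
  define z where "z u = (\<Sum>a<15. of_int (w a) * unit_preimage a u)" for u
  show "z \<in> ZGamma"
    using unit_solution_correct(1) unfolding z_def ZGamma_def QGamma_def by (auto intro!: Ints_sum Ints_mult)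
  fix b :: nat assume "b < 15"
  have "(\<lambda>u. lincomb c disc_gen u + z u)
      = (\<lambda>u. \<Sum>a<15. of_int (w a) * (lincomb (unit_coeffs a) disc_gen u + unit_preimage a u))"
    by (simp add: lincomb_def c_def z_def distrib_left sum.distrib sum_distrib_left sum_distrib_right
        sum.swap[of _ "{..<5}"] mult_ac)
  moreover have "of_int (w a) * (if a = b then 1 else 0) = (if a = b then of_int (w a) else (0 :: rat))"
    for a
    by simp
  ultimately show "gram_apply (\<lambda>u. lincomb c disc_gen u + z u) (row_basis ! b) = of_int (w b)"
    using \<open>b < 15\<close> by (simp add: gram_apply_sum gram_apply_scale unit_solution_correct(2))
qed

lemma dualL_generated:
  assumes "x \<in> dualL"
  shows "\<exists>c. in_S (\<lambda>u. x u - lincomb c disc_gen u)"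
proof -
  obtain c z where "z \<in> ZGamma" and match: "\<forall>b<15.
      gram_apply (\<lambda>u. lincomb c disc_gen u + z u) (row_basis ! b)
        = of_int \<lfloor>gram_apply x (row_basis ! b)\<rfloor>"
    using exists_lincomb_with_gram_apply_on_row_basis[of "\<lambda>b. \<lfloor>gram_apply x (row_basis ! b)\<rfloor>"]
    by blast
  define r where "r = (\<lambda>u. x u - (lincomb c disc_gen u + z u))"
  have "gram_apply r (row_basis ! b) = 0" if "b < 15" for b
  proof -
    have "gram_apply x (row_basis ! b) \<in> \<int>"
      using assms row_basis_bounds(2)[OF that] by (simp add: dualL_iff)
    then have "of_int \<lfloor>gram_apply x (row_basis ! b)\<rfloor> = gram_apply x (row_basis ! b)"
      by (metis Ints_cases floor_of_int)
    with match that show ?thesis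
      by (simp add: r_def gram_apply_diff)
  qed
  then have "gram_apply r v = 0" if "v < 24" for v
    using gram_apply_vanishes_if_vanishes_on_row_basis that by blast
  then have "gram_apply (\<lambda>u. x u - lincomb c disc_gen u) v = gram_apply z v" if "v < 24" for v
    using that by (simp add: r_def gram_apply_diff gram_apply_add)
  moreover have "(\<lambda>u. x u - lincomb c disc_gen u) \<in> QGamma"
    using assms disc_gen_in_dualL by (auto simp: lincomb_def QGamma_def dualL_def)
  ultimately show ?thesis
    using in_S_if_gram_apply_eq \<open>z \<in> ZGamma\<close> by blast
qed

theorem proposition4p4:
  "\<exists>e :: nat \<Rightarrow> nat \<Rightarrow> rat.
     (\<forall>k<5. e k \<in> dualL) \<and>
     (\<forall>x \<in> dualL. \<exists>c :: nat \<Rightarrow> int. in_S (\<lambda>u. x u - lincomb c e u)) \<and>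
     (\<forall>c :: nat \<Rightarrow> int. in_S (lincomb c e) \<longleftrightarrow> ((\<forall>k<4. 2 dvd c k) \<and> 16 dvd c 4)) \<and>
     (\<forall>k<5. (bil (e k) (e k) - target_gram k k) / 2 \<in> \<int>) \<and>
     (\<forall>k<5. \<forall>l<5. k \<noteq> l \<longrightarrow> bil (e k) (e l) - target_gram k l \<in> \<int>)"
proof (intro exI[of _ disc_gen] conjI)
  show "\<forall>k<5. disc_gen k \<in> dualL"
    using disc_gen_in_dualL by blast
  show "\<forall>x\<in>dualL. \<exists>c. in_S (\<lambda>u. x u - lincomb c disc_gen u)"
    using dualL_generated by blast
  have "k < 5 \<longleftrightarrow> k < 4 \<or> k = 4" for k :: nat
    by arith
  then show "\<forall>c. in_S (lincomb c disc_gen) \<longleftrightarrow> (\<forall>k<4. 2 dvd c k) \<and> 16 dvd c 4"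
    by (auto simp: in_S_lincomb_iff gen_order_def)
  show "\<forall>k<5. (bil (disc_gen k) (disc_gen k) - target_gram k k) / 2 \<in> \<int>"
    and "\<forall>k<5. \<forall>l<5. k \<noteq> l \<longrightarrow> bil (disc_gen k) (disc_gen l) - target_gram k l \<in> \<int>"
    by (simp_all add: all_less_five bil_disc_gen gen_gram_def target_gram_def)
qed

end
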